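(* Let $p>1$, $\alpha\in\mathbb{R}$, let $\psi_1$ and $h$ be as defined below. Then, as $s\to+\infty$: (i) $\displaystyle\frac{1}{\ln(\psi_1^2(s)+2)}=\frac{p-1}{2s}+\frac{\alpha(p-1)\ln s}{2s^2}+O\!\left(\frac1{s^2}\right)$; (ii) $\displaystyle h(s)=\frac1{p-1}\left[1-\frac{\alpha}{s}-\frac{\alpha^2\ln s}{s^2}\right]+O\!\left(\frac1{s^2}\right)$.
   Context: For $T>0$ let $\psi$ be the unique positive solution of $\psi'=\psi^p\ln^\alpha(\psi^2+2)$ with $\psi(t)\to+\infty$ as $t\to T$; set $\psi_1(s)=\psi(T-e^{-s})$ and $h(s)=e^{-s}\psi_1^{p-1}(s)\ln^\alpha(\psi_1^2(s)+2)$. *)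

theory Defs
  imports "HOL-Analysis.Analysis" "HOL-Library.Landau_Symbols"
begin

definition rhs :: "real \<Rightarrow> real \<Rightarrow> real \<Rightarrow> real" where
  "rhs p \<alpha> u = u powr p * (ln (u\<^sup>2 + 2)) powr \<alpha>"

definition psi1 :: "(real \<Rightarrow> real) \<Rightarrow> real \<Rightarrow> real \<Rightarrow> real" where
  "psi1 \<psi> T s = \<psi> (T - exp (- s))"

definition hfun :: "(real \<Rightarrow> real) \<Rightarrow> real \<Rightarrow> real \<Rightarrow> real \<Rightarrow> real \<Rightarrow> real" where
  "hfun \<psi> T p \<alpha> s = exp (- s) * (psi1 \<psi> T s) powr (p - 1) * (ln ((psi1 \<psi> T s)\<^sup>2 + 2)) powr \<alpha>"

end

(*
  Write L(u) = lsq u = ln (u^2 + 2) and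
  Phi(u) = u^(1-p) L(u)^(-alpha) (1 - 2 alpha / ((p - 1) L(u))) / (p - 1).
  Then Phi'(u) rhs(u) = -1 + O(1 / L(u)^2), so along the solution Phi(psi(t)) has derivative
  -1 + O(1 / L^2) and tends to 0 at the blow-up time; hence Phi(psi(t)) = (T - t) (1 + O(1 / L^2)).
  For t = T - e^(-s) this says q(s) = Phi(psi1(s)) e^s = 1 + O(1 / L^2).  Taking logarithms gives
  s = (p - 1)/2 L + alpha ln L + ln (p - 1) + o(1), which inverts to expansion (i) of 1 / L.
  Finally h(s) = e^(-s) psi1^(p-1) L^alpha = (1 - 2 alpha / ((p - 1) L)) / ((p - 1) q(s)),
  and substituting (i) gives (ii).
*)
theory Submission
  imports Defs "HOL-Real_Asymp.Real_Asymp"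
begin

definition lsq :: "real \<Rightarrow> real" where "lsq u = ln (u\<^sup>2 + 2)"

text \<open>Phi u approximates the time a solution needs to climb from u to infinity.\<close>
definition Phi :: "real \<Rightarrow> real \<Rightarrow> real \<Rightarrow> real" where
  "Phi p a u = u powr (1 - p) * lsq u powr (- a) * (1 - 2 * a / ((p - 1) * lsq u)) / (p - 1)"

definition Phi_err :: "real \<Rightarrow> real \<Rightarrow> real \<Rightarrow> real" where
  "Phi_err p a u = (a / lsq u * (4 / (u\<^sup>2 + 2))
     + 2 * a * (a + 1) / (p - 1) * (2 - 4 / (u\<^sup>2 + 2)) / (lsq u)\<^sup>2) / (p - 1)"

lemma lsq_pos: "u \<noteq> 0 \<Longrightarrow> lsq u > 0"
  unfolding lsq_def by (simp add: add_pos_nonneg)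

lemma rhs_pos: "u > 0 \<Longrightarrow> rhs p a u > 0"
  using lsq_pos[of u] by (simp add: rhs_def lsq_def)

lemma lsq_has_derivative: "(lsq has_real_derivative 2 * u / (u\<^sup>2 + 2)) (at u)"
  unfolding lsq_def[abs_def]
  by (auto intro!: derivative_eq_intros simp: add_nonneg_pos)

lemma Phi_has_derivative:
  assumes p: "p > 1" and u: "u > 0"
  shows "(Phi p a has_real_derivative (-1 + Phi_err p a u) / rhs p a u) (at u)"
proof -
  define L where "L = lsq u"
  define X where "X = u powr (1 - p) * L powr (- a)"
  define Y where "Y = ((1 - p) / u - 2 * a * u / ((u\<^sup>2 + 2) * L)) * (1 - 2 * a / ((p - 1) * L))
      + 4 * a * u / ((u\<^sup>2 + 2) * (p - 1) * L\<^sup>2)"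
  have L: "L > 0" using lsq_pos u L_def by simp
  have powr_u: "u powr (- p) = u powr (1 - p) / u"
    using u by (simp add: powr_diff powr_minus_divide)
  have powr_L: "L powr (- a - 1) = L powr (- a) / L"
    using L by (simp add: powr_diff powr_minus_divide)
  have deriv: "(Phi p a has_real_derivative X * Y / (p - 1)) (at u)"
    unfolding Phi_def[abs_def] using u L p
    by (auto intro!: derivative_eq_intros lsq_has_derivative simp: L_def[symmetric])
      (simp add: X_def Y_def powr_u powr_L field_simps power2_eq_square)
  have "X * rhs p a u = (u powr (1 - p) * u powr p) * (L powr (- a) * L powr a)"
    by (simp add: X_def rhs_def L_def lsq_def mult_ac)
  also have "\<dots> = u"
    using u L by (simp add: powr_add[symmetric])
  finally have X: "X = u / rhs p a u"
    using u L by (simp add: rhs_def L_def lsq_def eq_divide_eq)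
  have Y: "u * Y / (p - 1) = -1 + Phi_err p a u"
  proof -
    obtain q where q: "q > 0" "p = q + 1"
      using p by (intro that[of "p - 1"]) auto
    define D where "D = u\<^sup>2 + 2"
    have D: "D \<noteq> 0" "u * u = D - 2"
      by (simp_all add: D_def power2_eq_square add_nonneg_pos[THEN less_imp_neq, symmetric])
    show ?thesis
      using u L q D(1) unfolding Y_def Phi_err_def L_def[symmetric] D_def[symmetric]
      by (simp add: field_simps) (use D(2) in algebra)
  qed
  have "X * Y / (p - 1) = (-1 + Phi_err p a u) / rhs p a u"
    unfolding X Y[symmetric] by simp
  with deriv show ?thesis
    by simp
qed

lemma Phi_err_bigo: "p > 1 \<Longrightarrow> Phi_err p a \<in> O(\<lambda>u. 1 / (lsq u)\<^sup>2)"
  unfolding Phi_err_def[abs_def] lsq_def by real_asymp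

lemma Phi_at_top: "p > 1 \<Longrightarrow> (Phi p a \<longlongrightarrow> 0) at_top"
  unfolding Phi_def[abs_def] lsq_def by real_asymp

lemma lsq_at_top: "filterlim lsq at_top at_top"
  unfolding lsq_def[abs_def] by real_asymp

lemma lsq_mono: "0 < u \<Longrightarrow> u \<le> v \<Longrightarrow> lsq u \<le> lsq v"
  unfolding lsq_def by (simp add: add_pos_nonneg power_mono)

lemma Phi_mult_weight:
  assumes "u > 0"
  shows "Phi p a u * (u powr (p - 1) * lsq u powr a) = (1 - 2 * a / ((p - 1) * lsq u)) / (p - 1)"
proof -
  have "Phi p a u * (u powr (p - 1) * lsq u powr a)
      = (u powr (1 - p) * u powr (p - 1)) * (lsq u powr (- a) * lsq u powr a)
        * (1 - 2 * a / ((p - 1) * lsq u)) / (p - 1)"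
    by (simp add: Phi_def mult_ac)
  also have "\<dots> = (1 - 2 * a / ((p - 1) * lsq u)) / (p - 1)"
    using assms lsq_pos[of u] by (simp add: powr_add[symmetric])
  finally show ?thesis .
qed

lemma ln_Phi:
  assumes p: "p > 1" and u: "u > 0" and pos: "1 - 2 * a / ((p - 1) * lsq u) > 0"
  shows "ln (Phi p a u) = - (p - 1) / 2 * lsq u - a * ln (lsq u)
           + (p - 1) / 2 * ln (1 + 2 / u\<^sup>2) + ln (1 - 2 * a / ((p - 1) * lsq u)) - ln (p - 1)"
proof -
  have L: "lsq u > 0" using lsq_pos u by simp
  have "u\<^sup>2 + 2 = u\<^sup>2 * (1 + 2 / u\<^sup>2)"
    using u by (simp add: field_simps)
  then have "lsq u = ln (u\<^sup>2 * (1 + 2 / u\<^sup>2))"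
    by (simp add: lsq_def)
  also have "\<dots> = 2 * ln u + ln (1 + 2 / u\<^sup>2)"
  proof -
    have "1 + 2 / u\<^sup>2 > 0"
      by (simp add: add_pos_nonneg)
    then show ?thesis
      using u by (simp add: ln_mult ln_realpow)
  qed
  finally have ln_u: "ln u = (lsq u - ln (1 + 2 / u\<^sup>2)) / 2" by simp
  have "ln (Phi p a u) = (1 - p) * ln u - a * ln (lsq u)
      + ln (1 - 2 * a / ((p - 1) * lsq u)) - ln (p - 1)"
    using p u L pos by (simp add: Phi_def ln_mult ln_div)
  then show ?thesis
    unfolding ln_u by (simp add: field_simps)
qed

lemma remaining_time_bound:
  fixes F e :: "real \<Rightarrow> real"
  assumes "t < T"
    and deriv: "\<And>x. t \<le> x \<Longrightarrow> x < T \<Longrightarrow> (F has_real_derivative -1 + e x) (at x)"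
    and err: "\<And>x. t \<le> x \<Longrightarrow> x < T \<Longrightarrow> \<bar>e x\<bar> \<le> \<delta>"
    and lim: "(F \<longlongrightarrow> 0) (at_left T)"
  shows "\<bar>F t - (T - t)\<bar> \<le> \<delta> * (T - t)"
proof -
  have "\<bar>F t - F t' - (t' - t)\<bar> \<le> \<delta> * (t' - t)" if t': "t < t'" "t' < T" for t'
  proof -
    obtain z where z: "t < z" "z < t'" "F t' - F t = (t' - t) * (-1 + e z)"
      using MVT2[OF t'(1), of F "\<lambda>x. -1 + e x"] deriv t' by force
    then have "F t - F t' - (t' - t) = - ((t' - t) * e z)"
      by (simp add: algebra_simps)
    then have "\<bar>F t - F t' - (t' - t)\<bar> = (t' - t) * \<bar>e z\<bar>"
      using z t' by (simp add: abs_mult)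
    also have "\<dots> \<le> (t' - t) * \<delta>"
      using z t' err[of z] by (intro mult_left_mono) auto
    finally show ?thesis by (simp add: mult.commute)
  qed
  then have "\<forall>\<^sub>F t' in at_left T. \<bar>F t - F t' - (t' - t)\<bar> \<le> \<delta> * (t' - t)"
    using eventually_at_left_real[OF \<open>t < T\<close>] by (rule eventually_mono[rotated]) auto
  moreover have "((\<lambda>t'. \<bar>F t - F t' - (t' - t)\<bar>) \<longlongrightarrow> \<bar>F t - 0 - (T - t)\<bar>) (at_left T)"
    by (intro tendsto_intros lim tendsto_ident_at)
  moreover have "((\<lambda>t'. \<delta> * (t' - t)) \<longlongrightarrow> \<delta> * (T - t)) (at_left T)"
    by (intro tendsto_intros tendsto_ident_at)
  ultimately show ?thesis
    by (intro tendsto_le[OF trivial_limit_at_left_real]) auto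
qed

lemma tendsto_div_of_linear_log_relation:
  fixes L :: "real \<Rightarrow> real"
  assumes "c > 0" and L: "filterlim L at_top at_top"
    and rel: "((\<lambda>s. s - c * L s - a * ln (L s)) \<longlongrightarrow> \<rho>) at_top"
  shows "((\<lambda>s. s / L s) \<longlongrightarrow> c) at_top"
proof -
  have "((\<lambda>x::real. ln x / x) \<longlongrightarrow> 0) at_top" "((\<lambda>x::real. 1 / x) \<longlongrightarrow> 0) at_top"
    by real_asymp+
  then have "((\<lambda>s. ln (L s) / L s) \<longlongrightarrow> 0) at_top" "((\<lambda>s. 1 / L s) \<longlongrightarrow> 0) at_top"
    by (auto intro: filterlim_compose[OF _ L])
  then have "((\<lambda>s. c + a * (ln (L s) / L s) + (s - c * L s - a * ln (L s)) * (1 / L s))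
      \<longlongrightarrow> c + a * 0 + \<rho> * 0) at_top"
    by (intro tendsto_intros rel)
  moreover have "\<forall>\<^sub>F s in at_top. L s > 0"
    using L unfolding filterlim_at_top_dense by blast
  then have "\<forall>\<^sub>F s in at_top. c + a * (ln (L s) / L s) + (s - c * L s - a * ln (L s)) * (1 / L s)
      = s / L s"
    by eventually_elim (simp add: field_simps)
  ultimately show ?thesis
    by (simp add: tendsto_cong)
qed

lemma linear_log_relation_with_ln_s:
  fixes L :: "real \<Rightarrow> real"
  assumes c: "c > 0" and L: "filterlim L at_top at_top"
    and rel: "((\<lambda>s. s - c * L s - a * ln (L s)) \<longlongrightarrow> \<rho>) at_top"
  shows "((\<lambda>s. s - c * L s - a * ln s) \<longlongrightarrow> \<rho> + a * ln (1 / c)) at_top"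
proof -
  have "((\<lambda>s. L s / s) \<longlongrightarrow> 1 / c) at_top"
    using tendsto_inverse[OF tendsto_div_of_linear_log_relation[OF c L rel]] c
    by (simp add: inverse_eq_divide)
  then have "((\<lambda>s. ln (L s / s)) \<longlongrightarrow> ln (1 / c)) at_top"
    using c by (intro tendsto_ln) auto
  then have "((\<lambda>s. (s - c * L s - a * ln (L s)) + a * ln (L s / s))
      \<longlongrightarrow> \<rho> + a * ln (1 / c)) at_top"
    by (rule tendsto_add[OF rel tendsto_mult_left])
  moreover have "\<forall>\<^sub>F s in at_top. 0 < L s"
    using L unfolding filterlim_at_top_dense by blast
  then have "\<forall>\<^sub>F s in at_top. 0 < s \<and> 0 < L s"
    by (intro eventually_conj eventually_gt_at_top)
  then have "\<forall>\<^sub>F s in at_top. (s - c * L s - a * ln (L s)) + a * ln (L s / s) = s - c * L s - a * ln s"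
    by eventually_elim (simp add: ln_div algebra_simps)
  ultimately show ?thesis
    by (simp add: tendsto_cong)
qed

lemma inverse_expansion_of_linear_log_relation:
  fixes L :: "real \<Rightarrow> real"
  assumes c: "c > 0" and L: "filterlim L at_top at_top"
    and rel: "((\<lambda>s. s - c * L s - a * ln (L s)) \<longlongrightarrow> \<rho>) at_top"
  shows "(\<lambda>s. 1 / L s - (c / s + a * c * ln s / s\<^sup>2)) \<in> O(\<lambda>s. 1 / s\<^sup>2)"
proof -
  define r where "r s = s - c * L s - a * ln s" for s
  have ratio: "((\<lambda>s. s / L s) \<longlongrightarrow> c) at_top"
    by (rule tendsto_div_of_linear_log_relation[OF c L rel])
  have r_lim: "(r \<longlongrightarrow> \<rho> + a * ln (1 / c)) at_top"
    unfolding r_def[abs_def] by (rule linear_log_relation_with_ln_s[OF c L rel])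
  have "\<forall>\<^sub>F s in at_top. 0 < L s"
    using L unfolding filterlim_at_top_dense by blast
  then have ev_pos: "\<forall>\<^sub>F s in at_top. 0 < s \<and> 0 < L s"
    by (intro eventually_conj eventually_gt_at_top)
  have log_lims: "((\<lambda>x::real. (ln x)\<^sup>2 / x) \<longlongrightarrow> 0) at_top"
    "((\<lambda>x::real. ln x / x) \<longlongrightarrow> 0) at_top"
    by real_asymp+
  have "((\<lambda>s. (a\<^sup>2 * ((ln s)\<^sup>2 / s) + a * r s * (ln s / s) + r s) * (s / L s))
      \<longlongrightarrow> (a\<^sup>2 * 0 + a * (\<rho> + a * ln (1 / c)) * 0 + (\<rho> + a * ln (1 / c))) * c) at_top"
    by (intro tendsto_mult tendsto_add tendsto_const log_lims r_lim ratio)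
  moreover have "\<forall>\<^sub>F s in at_top. (a\<^sup>2 * ((ln s)\<^sup>2 / s) + a * r s * (ln s / s) + r s) * (s / L s)
      = (1 / L s - (c / s + a * c * ln s / s\<^sup>2)) / (1 / s\<^sup>2)"
    using ev_pos
  proof eventually_elim
    case (elim s)
    have cL: "c * L s = s - a * ln s - r s"
      by (simp add: r_def)
    have "(1 / L s - (c / s + a * c * ln s / s\<^sup>2)) / (1 / s\<^sup>2)
        = (s\<^sup>2 - (c * L s) * s - a * (c * L s) * ln s) / L s"
      using elim by (simp add: field_simps power2_eq_square)
    also have "\<dots> = (a\<^sup>2 * (ln s)\<^sup>2 + a * r s * ln s + r s * s) / L s"
      unfolding cL by (simp add: algebra_simps power2_eq_square)
    finally show ?case
      using elim by (simp add: field_simps power2_eq_square)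
  qed
  ultimately have "((\<lambda>s. (1 / L s - (c / s + a * c * ln s / s\<^sup>2)) / (1 / s\<^sup>2))
      \<longlongrightarrow> (\<rho> + a * ln (1 / c)) * c) at_top"
    by (simp add: tendsto_cong)
  then show ?thesis
    by (rule bigoI_tendsto) (use eventually_gt_at_top[of 0] in \<open>auto elim: eventually_mono\<close>)
qed

lemma second_order_rearrangement:
  fixes a c k l s L m :: real
  assumes "k * c = a"
  shows "m * (1 - a / s - a\<^sup>2 * l / s\<^sup>2) = m * (1 - k / L) + m * k * (1 / L - (c / s + a * c * l / s\<^sup>2))"
  unfolding assms[symmetric] by (simp add: divide_inverse power2_eq_square algebra_simps)

context
  fixes \<psi> :: "real \<Rightarrow> real" and T p a :: real
  assumes p: "p > 1"
    and pos: "\<And>t. t < T \<Longrightarrow> \<psi> t > 0"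
    and ode: "\<And>t. t < T \<Longrightarrow> (\<psi> has_real_derivative rhs p a (\<psi> t)) (at t)"
    and blowup: "filterlim \<psi> at_top (at_left T)"
begin

lemma solution_strict_mono:
  assumes "x < y" "y < T"
  shows "\<psi> x < \<psi> y"
proof (rule DERIV_pos_imp_increasing[OF \<open>x < y\<close>])
  fix z assume "x \<le> z" "z \<le> y"
  then have "z < T" using assms by simp
  then show "\<exists>d. DERIV \<psi> z :> d \<and> d > 0"
    using ode rhs_pos[OF pos] by blast
qed

lemma Phi_solution_remaining_time:
  assumes err: "\<And>u. U \<le> u \<Longrightarrow> \<bar>Phi_err p a u\<bar> \<le> C / (lsq u)\<^sup>2"
    and t: "t < T" "U \<le> \<psi> t"
  shows "\<bar>Phi p a (\<psi> t) - (T - t)\<bar> \<le> C / (lsq (\<psi> t))\<^sup>2 * (T - t)"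
proof (rule remaining_time_bound[OF t(1)])
  fix x assume x: "t \<le> x" "x < T"
  have "((\<lambda>x. Phi p a (\<psi> x)) has_real_derivative
      (-1 + Phi_err p a (\<psi> x)) / rhs p a (\<psi> x) * rhs p a (\<psi> x)) (at x)"
    using DERIV_chain2[OF Phi_has_derivative[OF p pos] ode] x by blast
  then show "((\<lambda>x. Phi p a (\<psi> x)) has_real_derivative -1 + Phi_err p a (\<psi> x)) (at x)"
    using rhs_pos[of "\<psi> x" p a] pos[OF x(2)] by simp
  have mono: "\<psi> t \<le> \<psi> x"
    using solution_strict_mono[of t x] x by (cases "t = x") auto
  have L: "0 < lsq (\<psi> t)" "lsq (\<psi> t) \<le> lsq (\<psi> x)"
    using lsq_pos[of "\<psi> t"] lsq_mono[OF _ mono] pos[OF t(1)] by auto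
  have "0 \<le> C"
    using err[OF t(2)] L(1) order_trans[OF abs_ge_zero] by (fastforce simp: zero_le_divide_iff)
  then have "C / (lsq (\<psi> x))\<^sup>2 \<le> C / (lsq (\<psi> t))\<^sup>2"
    using L by (intro divide_left_mono power_mono mult_pos_pos) auto
  then show "\<bar>Phi_err p a (\<psi> x)\<bar> \<le> C / (lsq (\<psi> t))\<^sup>2"
    using err[of "\<psi> x"] t(2) mono by simp
next
  show "((\<lambda>x. Phi p a (\<psi> x)) \<longlongrightarrow> 0) (at_left T)"
    by (rule filterlim_compose[OF Phi_at_top[OF p] blowup])
qed

lemma psi1_at_top: "filterlim (psi1 \<psi> T) at_top at_top"
proof -
  have "filterlim (\<lambda>s. T - exp (- s)) (at_left T) at_top"
    unfolding filterlim_at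
  proof
    show "\<forall>\<^sub>F s in at_top. T - exp (- s) \<in> {..<T} \<and> T - exp (- s) \<noteq> T"
      by (intro always_eventually) auto
    show "((\<lambda>s. T - exp (- s)) \<longlongrightarrow> T) at_top"
      by real_asymp
  qed
  then show ?thesis
    unfolding psi1_def[abs_def] by (rule filterlim_compose[OF blowup])
qed

lemma Phi_psi1_ratio:
  "(\<lambda>s. Phi p a (psi1 \<psi> T s) * exp s - 1) \<in> O(\<lambda>s. 1 / (lsq (psi1 \<psi> T s))\<^sup>2)"
proof -
  obtain C where "\<forall>\<^sub>F u in at_top. \<bar>Phi_err p a u\<bar> \<le> C * \<bar>1 / (lsq u)\<^sup>2\<bar>"
    using landau_o.bigE[OF Phi_err_bigo[OF p]] by auto
  then obtain U where U: "\<And>u. U \<le> u \<Longrightarrow> \<bar>Phi_err p a u\<bar> \<le> C / (lsq u)\<^sup>2"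
    by (auto simp: eventually_at_top_linorder)
  have "\<forall>\<^sub>F s in at_top. U \<le> psi1 \<psi> T s"
    using psi1_at_top by (simp add: filterlim_at_top)
  then have "\<forall>\<^sub>F s in at_top.
      norm (Phi p a (psi1 \<psi> T s) * exp s - 1) \<le> C * norm (1 / (lsq (psi1 \<psi> T s))\<^sup>2)"
  proof eventually_elim
    case (elim s)
    have "\<bar>Phi p a (psi1 \<psi> T s) - exp (- s)\<bar> \<le> C / (lsq (psi1 \<psi> T s))\<^sup>2 * exp (- s)"
      using Phi_solution_remaining_time[where t = "T - exp (- s)", OF U] elim by (simp add: psi1_def)
    then have "\<bar>Phi p a (psi1 \<psi> T s) - exp (- s)\<bar> * \<bar>exp s\<bar>
        \<le> C / (lsq (psi1 \<psi> T s))\<^sup>2 * (exp (- s) * exp s)"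
      unfolding mult.assoc[symmetric] abs_exp_cancel by (rule mult_right_mono) simp_all
    then show ?case
      unfolding abs_mult[symmetric] left_diff_distrib exp_add[symmetric] by simp
  qed
  then show ?thesis
    by (rule bigoI)
qed

lemma Phi_psi1_ratio_tendsto: "((\<lambda>s. Phi p a (psi1 \<psi> T s) * exp s) \<longlongrightarrow> 1) at_top"
proof -
  have "((\<lambda>x. 1 / (lsq x)\<^sup>2) \<longlongrightarrow> 0) at_top"
    unfolding lsq_def by real_asymp
  then have "((\<lambda>s. 1 / (lsq (psi1 \<psi> T s))\<^sup>2 / 1) \<longlongrightarrow> 0) at_top"
    using filterlim_compose[OF _ psi1_at_top] by simp
  then have "(\<lambda>s. 1 / (lsq (psi1 \<psi> T s))\<^sup>2) \<in> o(\<lambda>_. 1)"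
    by (rule smalloI_tendsto) simp
  then have "(\<lambda>s. Phi p a (psi1 \<psi> T s) * exp s - 1) \<in> o(\<lambda>_. 1)"
    by (rule landau_o.big_small_trans[OF Phi_psi1_ratio])
  then have "((\<lambda>s. (Phi p a (psi1 \<psi> T s) * exp s - 1) / 1) \<longlongrightarrow> 0) at_top"
    by (rule smalloD_tendsto)
  then show ?thesis
    by (simp add: LIM_zero_iff)
qed

lemma lsq_psi1_at_top: "filterlim (\<lambda>s. lsq (psi1 \<psi> T s)) at_top at_top"
  by (rule filterlim_compose[OF lsq_at_top psi1_at_top])

lemma Phi_factor_psi1_tendsto:
  "((\<lambda>s. 1 - 2 * a / ((p - 1) * lsq (psi1 \<psi> T s))) \<longlongrightarrow> 1) at_top"
proof -
  have "((\<lambda>x::real. 1 - k / x) \<longlongrightarrow> 1) at_top" for k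
    by real_asymp
  from this[of "2 * a / (p - 1)"] have "((\<lambda>x. 1 - 2 * a / ((p - 1) * x)) \<longlongrightarrow> 1) at_top"
    unfolding divide_divide_eq_left .
  then show ?thesis
    by (rule filterlim_compose[OF _ lsq_psi1_at_top])
qed

lemma lsq_psi1_log_relation:
  "((\<lambda>s. s - (p - 1) / 2 * lsq (psi1 \<psi> T s) - a * ln (lsq (psi1 \<psi> T s))) \<longlongrightarrow> ln (p - 1)) at_top"
proof -
  define u where "u = psi1 \<psi> T"
  define q where "q = (\<lambda>s. Phi p a (u s) * exp s)"
  define C where "C = (\<lambda>s. 1 - 2 * a / ((p - 1) * lsq (u s)))"
  have q: "(q \<longlongrightarrow> 1) at_top" and C: "(C \<longlongrightarrow> 1) at_top" and u: "filterlim u at_top at_top"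
    using Phi_psi1_ratio_tendsto Phi_factor_psi1_tendsto psi1_at_top
    by (simp_all add: q_def C_def u_def)
  have "((\<lambda>x::real. ln (1 + 2 / x\<^sup>2)) \<longlongrightarrow> 0) at_top"
    by real_asymp
  then have "((\<lambda>s. ln (q s) - (p - 1) / 2 * ln (1 + 2 / (u s)\<^sup>2) - ln (C s) + ln (p - 1))
      \<longlongrightarrow> ln 1 - (p - 1) / 2 * 0 - ln 1 + ln (p - 1)) at_top"
    by (intro tendsto_intros q C filterlim_compose[OF _ u]) simp_all
  moreover have "\<forall>\<^sub>F s in at_top. 0 < q s" "\<forall>\<^sub>F s in at_top. 0 < C s"
    "\<forall>\<^sub>F s in at_top. 0 < u s"
    using order_tendstoD(1)[OF q, of 0] order_tendstoD(1)[OF C, of 0] u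
    by (simp_all add: filterlim_at_top_dense)
  then have "\<forall>\<^sub>F s in at_top. ln (q s) - (p - 1) / 2 * ln (1 + 2 / (u s)\<^sup>2) - ln (C s) + ln (p - 1)
      = s - (p - 1) / 2 * lsq (u s) - a * ln (lsq (u s))"
  proof eventually_elim
    case (elim s)
    then have "Phi p a (u s) > 0"
      by (simp add: q_def zero_less_mult_iff)
    then have "ln (q s) = ln (Phi p a (u s)) + s"
      by (simp add: q_def ln_mult)
    moreover have "ln (Phi p a (u s)) = - (p - 1) / 2 * lsq (u s) - a * ln (lsq (u s))
        + (p - 1) / 2 * ln (1 + 2 / (u s)\<^sup>2) + ln (C s) - ln (p - 1)"
      using ln_Phi[OF p, of "u s" a] elim by (simp add: C_def)
    ultimately show ?case
      by linarith
  qed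
  ultimately show ?thesis
    by (simp add: tendsto_cong u_def)
qed

lemma lsq_psi1_inverse_square_bigo:
  "(\<lambda>s. 1 / (lsq (psi1 \<psi> T s))\<^sup>2) \<in> O(\<lambda>s. 1 / s\<^sup>2)"
proof (rule bigoI_tendsto)
  have "((\<lambda>s. s / lsq (psi1 \<psi> T s)) \<longlongrightarrow> (p - 1) / 2) at_top"
    using p tendsto_div_of_linear_log_relation[OF _ lsq_psi1_at_top lsq_psi1_log_relation] by simp
  then have "((\<lambda>s. (s / lsq (psi1 \<psi> T s))\<^sup>2) \<longlongrightarrow> ((p - 1) / 2)\<^sup>2) at_top"
    by (rule tendsto_power)
  then show "((\<lambda>s. 1 / (lsq (psi1 \<psi> T s))\<^sup>2 / (1 / s\<^sup>2)) \<longlongrightarrow> ((p - 1) / 2)\<^sup>2) at_top"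
    by (simp add: power_divide)
  show "\<forall>\<^sub>F s in at_top. 1 / s\<^sup>2 \<noteq> (0::real)"
    using eventually_gt_at_top[of 0] by eventually_elim simp
qed

lemma hfun_leading_bigo:
  "(\<lambda>s. hfun \<psi> T p a s - (1 - 2 * a / ((p - 1) * lsq (psi1 \<psi> T s))) / (p - 1))
    \<in> O(\<lambda>s. 1 / s\<^sup>2)"
proof -
  define u where "u = psi1 \<psi> T"
  define q where "q = (\<lambda>s. Phi p a (u s) * exp s)"
  define C where "C = (\<lambda>s. 1 - 2 * a / ((p - 1) * lsq (u s)))"
  have q: "(q \<longlongrightarrow> 1) at_top" and C: "(C \<longlongrightarrow> 1) at_top"
    using Phi_psi1_ratio_tendsto Phi_factor_psi1_tendsto by (simp_all add: q_def C_def u_def)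
  have "((\<lambda>s. C s / ((p - 1) * q s)) \<longlongrightarrow> 1 / ((p - 1) * 1)) at_top"
    using p by (intro tendsto_divide tendsto_mult_left q C) simp
  then have "(\<lambda>s. C s / ((p - 1) * q s)) \<in> O(\<lambda>_. 1)"
    by (intro bigoI_tendsto[where c = "1 / ((p - 1) * 1)"]) simp_all
  moreover have "(\<lambda>s. 1 - q s) \<in> O(\<lambda>s. 1 / (lsq (u s))\<^sup>2)"
    using landau_o.big.uminus_in_iff[THEN iffD2, OF Phi_psi1_ratio] by (simp add: q_def u_def)
  ultimately have "(\<lambda>s. C s / ((p - 1) * q s) * (1 - q s)) \<in> O(\<lambda>s. 1 * (1 / (lsq (u s))\<^sup>2))"
    by (rule landau_o.big.mult)
  then have bound: "(\<lambda>s. C s / ((p - 1) * q s) * (1 - q s)) \<in> O(\<lambda>s. 1 / s\<^sup>2)"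
    using lsq_psi1_inverse_square_bigo by (simp add: u_def landau_o.big_trans)
  have "\<forall>\<^sub>F s in at_top. 0 < q s" "\<forall>\<^sub>F s in at_top. 0 < u s"
    using order_tendstoD(1)[OF q, of 0] psi1_at_top by (simp_all add: u_def filterlim_at_top_dense)
  then have ev_eq: "\<forall>\<^sub>F s in at_top. C s / ((p - 1) * q s) * (1 - q s)
      = hfun \<psi> T p a s - (1 - 2 * a / ((p - 1) * lsq (psi1 \<psi> T s))) / (p - 1)"
  proof eventually_elim
    case (elim s)
    define W where "W = u s powr (p - 1) * lsq (u s) powr a"
    have "q s * (exp (- s) * W) = Phi p a (u s) * W * (exp s * exp (- s))"
      by (simp add: q_def mult_ac)
    also have "\<dots> = C s / (p - 1)"
      using Phi_mult_weight[OF elim(2), of p a] by (simp add: W_def C_def exp_minus_inverse)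
    finally have h: "hfun \<psi> T p a s = C s / ((p - 1) * q s)"
      using elim(1) p by (simp add: hfun_def W_def u_def lsq_def mult.assoc field_simps)
    have C_s: "1 - 2 * a / ((p - 1) * lsq (psi1 \<psi> T s)) = C s"
      by (simp add: C_def u_def)
    show ?case
      unfolding h C_s using elim(1) by (simp add: right_diff_distrib)
  qed
  show ?thesis
    using landau_o.big.in_cong[OF ev_eq] bound by simp
qed

lemma inverse_lsq_psi1_expansion:
  "(\<lambda>s. 1 / lsq (psi1 \<psi> T s) - ((p - 1) / 2 / s + a * ((p - 1) / 2) * ln s / s\<^sup>2))
    \<in> O(\<lambda>s. 1 / s\<^sup>2)"
  using p inverse_expansion_of_linear_log_relation[OF _ lsq_psi1_at_top lsq_psi1_log_relation] by simp

lemma hfun_expansion: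
  "(\<lambda>s. hfun \<psi> T p a s - (1 / (p - 1)) * (1 - a / s - a\<^sup>2 * ln s / s\<^sup>2))
    \<in> O(\<lambda>s. 1 / s\<^sup>2)"
proof -
  define L where "L s = lsq (psi1 \<psi> T s)" for s
  define D where "D s = 1 / L s - ((p - 1) / 2 / s + a * ((p - 1) / 2) * ln s / s\<^sup>2)" for s
  have "2 * a / (p - 1) * ((p - 1) / 2) = a"
    using p by simp
  note rearrangement = second_order_rearrangement[OF this, where m = "1 / (p - 1)"]
  have "(\<lambda>s. hfun \<psi> T p a s - (1 / (p - 1)) * (1 - a / s - a\<^sup>2 * ln s / s\<^sup>2))
      = (\<lambda>s. (hfun \<psi> T p a s - 1 / (p - 1) * (1 - 2 * a / (p - 1) / L s))
          - 1 / (p - 1) * (2 * a / (p - 1)) * D s)"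
  proof
    fix s
    show "hfun \<psi> T p a s - (1 / (p - 1)) * (1 - a / s - a\<^sup>2 * ln s / s\<^sup>2)
      = (hfun \<psi> T p a s - 1 / (p - 1) * (1 - 2 * a / (p - 1) / L s))
          - 1 / (p - 1) * (2 * a / (p - 1)) * D s"
      using rearrangement[of s "ln s" "L s"] unfolding D_def by linarith
  qed
  moreover have "(\<lambda>s. (hfun \<psi> T p a s - 1 / (p - 1) * (1 - 2 * a / (p - 1) / L s))
          - 1 / (p - 1) * (2 * a / (p - 1)) * D s) \<in> O(\<lambda>s. 1 / s\<^sup>2)"
    using sum_in_bigo(2)[OF hfun_leading_bigo[folded L_def]
        cmult_in_bigo_iff[where c = "1 / (p - 1) * (2 * a / (p - 1))", THEN iffD2, OF disjI2,
          OF inverse_lsq_psi1_expansion[folded L_def]]]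
    by (simp add: D_def)
  ultimately show ?thesis
    by simp
qed

end

theorem lemmaA5:
  fixes \<psi> :: "real \<Rightarrow> real" and T p \<alpha> :: real
  assumes "T > 0" and "p > 1"
    and pos: "\<And>t. t < T \<Longrightarrow> \<psi> t > 0"
    and ode: "\<And>t. t < T \<Longrightarrow> (\<psi> has_real_derivative rhs p \<alpha> (\<psi> t)) (at t)"
    and blowup: "filterlim \<psi> at_top (at_left T)"
  shows "(\<lambda>s. 1 / ln ((psi1 \<psi> T s)\<^sup>2 + 2)
              - ((p - 1) / (2 * s) + \<alpha> * (p - 1) * ln s / (2 * s\<^sup>2)))
           \<in> O(\<lambda>s. 1 / s\<^sup>2) \<and>
         (\<lambda>s. hfun \<psi> T p \<alpha> s
              - (1 / (p - 1)) * (1 - \<alpha> / s - \<alpha>\<^sup>2 * ln s / s\<^sup>2))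
           \<in> O(\<lambda>s. 1 / s\<^sup>2)"
  using inverse_lsq_psi1_expansion[OF \<open>p > 1\<close> pos ode blowup]
    hfun_expansion[OF \<open>p > 1\<close> pos ode blowup]
  by (simp add: lsq_def)

end
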